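(* Let $s$ be one of $s(x)=\sigma(x)$ (Weierstrass sigma function), $s(x)=\sinh x$, $s(x)=x$, let $f(q,p;\alpha)=\frac{s(q+p+\alpha)s(q-p+\alpha)}{s(q+p-\alpha)s(q-p-\alpha)}$, and let $\gamma$ be a constant; set $\alpha=-2\gamma$, $\beta=\gamma$. Let $q(n_1,n_2;y,z)$ satisfy, for all $y,z$, the lattice equation $$f(q,q_{1,0};\alpha)f(q,q_{-1,0};\alpha)f(q,q_{0,1};\beta)f(q,q_{0,-1};\beta)f(q,q_{-1,-1};\gamma)f(q,q_{1,1};\gamma)=1$$ and the flows $$\frac{q_{,y}+1}{q_{,y}-1}=f(q,q_{-1,0};\alpha)f(q,q_{0,1};\beta)f(q,q_{1,1};\gamma),\qquad \frac{q_{,z}+1}{q_{,z}-1}=f(q,q_{-1,0};\alpha)f(q,q_{0,-1};\beta)f(q,q_{-1,-1};\gamma).$$ Fix an integer $j$ and put $u(2k)=q(k,j)$, $u(2k-1)=q(k,j+1)$. Then $u_{,t}:=\tfrac12(u_{,y}+u_{,z})$ satisfies, at every $n\in\mathbb Z$, $$u_{,t}=\frac{1}{f(u,u_2;2\gamma)f(u,u_1;-\gamma)f(u,u_{-1};-\gamma)-1}-\frac{1}{f(u,u_1;-\gamma)f(u,u_{-1};-\gamma)f(u,u_{-2};2\gamma)-1},$$ where $u=u(n)$, $u_m=u(n+m)$.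
   Context: Notation: $q_{i,j}=q(n_1+i,n_2+j)$; subscripts ${,y},{,z},{,t}$ denote partial derivatives. *)

theory Defs
  imports "HOL-Analysis.Analysis"
begin

definition wE :: "complex \<Rightarrow> complex" where
  "wE u = (1 - u) * exp (u + u^2 / 2)"

text \<open>Weierstrass sigma function of the lattice generated by w1, w2, as the limit of the
  (absolutely convergent) Weierstrass product taken over square shells.\<close>
definition weierstrass_sigma :: "complex \<Rightarrow> complex \<Rightarrow> complex \<Rightarrow> complex" where
  "weierstrass_sigma w1 w2 z =
     lim (\<lambda>N::nat. z * (\<Prod>mn \<in> ({- int N..int N} \<times> {- int N..int N}) - {(0,0)}.
            wE (z / (of_int (fst mn) * w1 + of_int (snd mn) * w2))))"

definition fq :: "(complex \<Rightarrow> complex) \<Rightarrow> complex \<Rightarrow> complex \<Rightarrow> complex \<Rightarrow> complex" where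
  "fq s q p a = s (q + p + a) * s (q - p + a) / (s (q + p - a) * s (q - p - a))"

definition fq_def_ok :: "(complex \<Rightarrow> complex) \<Rightarrow> complex \<Rightarrow> complex \<Rightarrow> complex \<Rightarrow> bool" where
  "fq_def_ok s q p a \<longleftrightarrow> s (q + p - a) \<noteq> 0 \<and> s (q - p - a) \<noteq> 0"

definition qy :: "(int \<Rightarrow> int \<Rightarrow> real \<Rightarrow> real \<Rightarrow> complex) \<Rightarrow> int \<Rightarrow> int \<Rightarrow> real \<Rightarrow> real \<Rightarrow> complex" where
  "qy q n1 n2 y z = vector_derivative (\<lambda>y'. q n1 n2 y' z) (at y)"
definition qz :: "(int \<Rightarrow> int \<Rightarrow> real \<Rightarrow> real \<Rightarrow> complex) \<Rightarrow> int \<Rightarrow> int \<Rightarrow> real \<Rightarrow> real \<Rightarrow> complex" where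
  "qz q n1 n2 y z = vector_derivative (\<lambda>z'. q n1 n2 y z') (at z)"

definition ured :: "(int \<Rightarrow> int \<Rightarrow> real \<Rightarrow> real \<Rightarrow> complex) \<Rightarrow> int \<Rightarrow> int \<Rightarrow> real \<Rightarrow> real \<Rightarrow> complex" where
  "ured q j n y z = (if even n then q (n div 2) j y z else q ((n + 1) div 2) (j + 1) y z)"

end

theory Submission
  imports Defs
begin

text \<open>At a lattice point let \<open>a, b, c, d, e, g\<close> be the six factors of the lattice equation, in
  the order in which it lists them. For even \<open>n = 2k\<close>, \<open>u\<close> sits at \<open>(k,j)\<close> and, since
  \<open>f(q,p;-a) = 1/f(q,p;a)\<close>, the two products on the right-hand side are \<open>1/(a g c)\<close> and
  \<open>1/(g c b)\<close>. The lattice equation turns the first into the \<open>z\<close>-flow factor \<open>b d e\<close>, and the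
  second is the reciprocal of the \<open>y\<close>-flow factor \<open>b c g\<close>. Solving the flows for \<open>q\<^sub>,\<^sub>y\<close> and
  \<open>q\<^sub>,\<^sub>z\<close> by inverting the Cayley transform \<open>w \<mapsto> (w+1)/(w-1)\<close> then gives the formula.
  For odd \<open>n = 2k - 1\<close>, \<open>u\<close> sits at \<open>(k,j+1)\<close> and the roles of \<open>y\<close> and \<open>z\<close> are exchanged.\<close>

lemma fq_uminus: "fq s x p (- a) = inverse (fq s x p a)"
  unfolding fq_def by (simp add: algebra_simps)

lemma fq_double: "fq s x p (2 * a) = inverse (fq s x p (-2 * a))"
  using fq_uminus[of s x p "-2 * a"] by simp

lemma cayley_inverse:
  fixes w F :: "'a::field_char_0"
  assumes "w \<noteq> 1" and "(w + 1) / (w - 1) = F"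
  shows "w = 1 + 2 / (F - 1)"
proof -
  have "F - 1 = 2 / (w - 1)"
    using assms by (simp add: field_simps)
  then have "2 / (F - 1) = w - 1"
    by simp
  then show ?thesis
    by simp
qed

lemma flow_half_sum:
  fixes v w A B :: "'a::field_char_0"
  assumes "v \<noteq> 1" "w \<noteq> 1"
    and "(v + 1) / (v - 1) = A" and "(w + 1) / (w - 1) * B = 1"
  shows "(v + w) / 2 = 1 / (A - 1) - 1 / (B - 1)"
proof -
  have B: "B \<noteq> 0" "(w + 1) / (w - 1) = inverse B"
    using assms(4) by (auto simp: inverse_unique[symmetric] mult.commute)
  have B1: "B \<noteq> 1"
    using assms(2,4) by (auto simp: field_simps)
  have v: "v = 1 + 2 / (A - 1)"
    using cayley_inverse[OF assms(1,3)] .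
  have "w = 1 + 2 / (inverse B - 1)"
    using cayley_inverse[OF assms(2) B(2)] .
  also have "\<dots> = - 1 - 2 / (B - 1)"
    using B B1 by (simp add: field_simps)
  finally show ?thesis
    using v by (simp add: field_simps)
qed

lemma lattice_product_inverse:
  fixes a b c d e g :: "'a::field"
  assumes "a * b * c * d * e * g = 1"
  shows "b * d * e = inverse a * inverse c * inverse g"
proof -
  have "a \<noteq> 0" "c \<noteq> 0" "g \<noteq> 0"
    using assms by auto
  then show ?thesis
    using assms by (simp add: field_simps)
qed

lemma ured_even: "ured q j (2 * k) = q k j"
  by (simp add: ured_def fun_eq_iff)

lemma ured_odd: "ured q j (2 * k - 1) = q k (j + 1)"
  by (simp add: ured_def fun_eq_iff)

definition ured_t :: "(int \<Rightarrow> int \<Rightarrow> real \<Rightarrow> real \<Rightarrow> complex) \<Rightarrow> int \<Rightarrow> int \<Rightarrow> real \<Rightarrow> real \<Rightarrow> complex"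
  where "ured_t q j n y z =
    (vector_derivative (\<lambda>y'. ured q j n y' z) (at y) + vector_derivative (\<lambda>z'. ured q j n y z') (at z)) / 2"

definition reduced_rhs :: "(complex \<Rightarrow> complex) \<Rightarrow> complex \<Rightarrow> (int \<Rightarrow> complex) \<Rightarrow> int \<Rightarrow> complex"
  where "reduced_rhs s \<gamma> u n =
    1 / (fq s (u n) (u (n+2)) (2*\<gamma>) * fq s (u n) (u (n+1)) (-\<gamma>) * fq s (u n) (u (n-1)) (-\<gamma>) - 1)
  - 1 / (fq s (u n) (u (n+1)) (-\<gamma>) * fq s (u n) (u (n-1)) (-\<gamma>) * fq s (u n) (u (n-2)) (2*\<gamma>) - 1)"

text \<open>Only the lattice equation and the two flows enter: they already force the six factors
  to be nonzero, and \<open>f(q,p;-a) = 1/f(q,p;a)\<close> holds unconditionally under \<open>x / 0 = 0\<close>.\<close>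

locale lattice_flow_solution =
  fixes s :: "complex \<Rightarrow> complex"
    and q :: "int \<Rightarrow> int \<Rightarrow> real \<Rightarrow> real \<Rightarrow> complex"
    and \<gamma> :: complex
  assumes lattice: "\<And>n1 n2 y z.
        fq s (q n1 n2 y z) (q (n1+1) n2 y z) (-2*\<gamma>) * fq s (q n1 n2 y z) (q (n1-1) n2 y z) (-2*\<gamma>)
      * fq s (q n1 n2 y z) (q n1 (n2+1) y z) \<gamma> * fq s (q n1 n2 y z) (q n1 (n2-1) y z) \<gamma>
      * fq s (q n1 n2 y z) (q (n1-1) (n2-1) y z) \<gamma> * fq s (q n1 n2 y z) (q (n1+1) (n2+1) y z) \<gamma> = 1"
    and flow_y: "\<And>n1 n2 y z.
        (qy q n1 n2 y z + 1) / (qy q n1 n2 y z - 1) =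
        fq s (q n1 n2 y z) (q (n1-1) n2 y z) (-2*\<gamma>) * fq s (q n1 n2 y z) (q n1 (n2+1) y z) \<gamma>
      * fq s (q n1 n2 y z) (q (n1+1) (n2+1) y z) \<gamma>"
    and flow_z: "\<And>n1 n2 y z.
        (qz q n1 n2 y z + 1) / (qz q n1 n2 y z - 1) =
        fq s (q n1 n2 y z) (q (n1-1) n2 y z) (-2*\<gamma>) * fq s (q n1 n2 y z) (q n1 (n2-1) y z) \<gamma>
      * fq s (q n1 n2 y z) (q (n1-1) (n2-1) y z) \<gamma>"
    and qy_ne_1: "\<And>n1 n2 y z. qy q n1 n2 y z \<noteq> 1"
    and qz_ne_1: "\<And>n1 n2 y z. qz q n1 n2 y z \<noteq> 1"
begin

lemma ured_t_even:
  "ured_t q j (2 * k) y z = reduced_rhs s \<gamma> (\<lambda>m. ured q j m y z) (2 * k)"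
proof -
  define a where "a = fq s (q k j y z) (q (k+1) j y z) (-2*\<gamma>)"
  define b where "b = fq s (q k j y z) (q (k-1) j y z) (-2*\<gamma>)"
  define c where "c = fq s (q k j y z) (q k (j+1) y z) \<gamma>"
  define d where "d = fq s (q k j y z) (q k (j-1) y z) \<gamma>"
  define e where "e = fq s (q k j y z) (q (k-1) (j-1) y z) \<gamma>"
  define g where "g = fq s (q k j y z) (q (k+1) (j+1) y z) \<gamma>"
  have lat: "a * b * c * d * e * g = 1"
    using lattice[of k j y z] unfolding a_def b_def c_def d_def e_def g_def .
  then have "b \<noteq> 0" "c \<noteq> 0" "g \<noteq> 0"
    by auto
  have nbrs: "ured q j (2*k + 2) = q (k+1) j" "ured q j (2*k + 1) = q (k+1) (j+1)"
    "ured q j (2*k - 1) = q k (j+1)" "ured q j (2*k - 2) = q (k-1) j"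
    using ured_even[of q j "k+1"] ured_odd[of q j "k+1"] ured_odd[of q j k] ured_even[of q j "k-1"]
    by (simp_all add: algebra_simps)
  have rhs: "reduced_rhs s \<gamma> (\<lambda>m. ured q j m y z) (2 * k)
      = 1 / (inverse a * inverse g * inverse c - 1) - 1 / (inverse g * inverse c * inverse b - 1)"
    unfolding reduced_rhs_def nbrs ured_even fq_double fq_uminus
      a_def[symmetric] b_def[symmetric] c_def[symmetric] g_def[symmetric] ..
  have "ured_t q j (2 * k) y z = (qz q k j y z + qy q k j y z) / 2"
    unfolding ured_t_def ured_even qy_def qz_def by (simp add: add.commute)
  also have "\<dots> = 1 / (inverse a * inverse g * inverse c - 1) - 1 / (inverse g * inverse c * inverse b - 1)"
  proof (rule flow_half_sum[OF qz_ne_1 qy_ne_1])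
    show "(qz q k j y z + 1) / (qz q k j y z - 1) = inverse a * inverse g * inverse c"
      using flow_z[of k j y z] lattice_product_inverse[OF lat]
      unfolding b_def d_def e_def by (simp add: ac_simps)
    show "(qy q k j y z + 1) / (qy q k j y z - 1) * (inverse g * inverse c * inverse b) = 1"
      using flow_y[of k j y z] \<open>b \<noteq> 0\<close> \<open>c \<noteq> 0\<close> \<open>g \<noteq> 0\<close>
      unfolding b_def c_def g_def by (simp add: field_simps)
  qed
  finally show ?thesis
    unfolding rhs .
qed

lemma ured_t_odd:
  "ured_t q j (2 * k - 1) y z = reduced_rhs s \<gamma> (\<lambda>m. ured q j m y z) (2 * k - 1)"
proof -
  define a where "a = fq s (q k (j+1) y z) (q (k+1) (j+1) y z) (-2*\<gamma>)"
  define b where "b = fq s (q k (j+1) y z) (q (k-1) (j+1) y z) (-2*\<gamma>)"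
  define c where "c = fq s (q k (j+1) y z) (q k (j+2) y z) \<gamma>"
  define d where "d = fq s (q k (j+1) y z) (q k j y z) \<gamma>"
  define e where "e = fq s (q k (j+1) y z) (q (k-1) j y z) \<gamma>"
  define g where "g = fq s (q k (j+1) y z) (q (k+1) (j+2) y z) \<gamma>"
  have "a * b * c * d * e * g = 1"
    using lattice[of k "j+1" y z]
    unfolding a_def b_def c_def d_def e_def g_def add_diff_cancel_right' add.assoc one_add_one .
  then have lat: "a * b * d * c * g * e = 1"
    by (simp only: ac_simps)
  then have "b \<noteq> 0" "d \<noteq> 0" "e \<noteq> 0"
    by auto
  have nbrs: "ured q j (2*k - 1 + 2) = q (k+1) (j+1)" "ured q j (2*k - 1 + 1) = q k j"
    "ured q j (2*k - 1 - 1) = q (k-1) j" "ured q j (2*k - 1 - 2) = q (k-1) (j+1)"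
    using ured_odd[of q j "k+1"] ured_even[of q j k] ured_even[of q j "k-1"] ured_odd[of q j "k-1"]
    by (simp_all add: algebra_simps)
  have rhs: "reduced_rhs s \<gamma> (\<lambda>m. ured q j m y z) (2 * k - 1)
      = 1 / (inverse a * inverse d * inverse e - 1) - 1 / (inverse d * inverse e * inverse b - 1)"
    unfolding reduced_rhs_def nbrs ured_odd fq_double fq_uminus
      a_def[symmetric] b_def[symmetric] d_def[symmetric] e_def[symmetric] ..
  have "ured_t q j (2 * k - 1) y z = (qy q k (j+1) y z + qz q k (j+1) y z) / 2"
    unfolding ured_t_def ured_odd qy_def qz_def ..
  also have "\<dots> = 1 / (inverse a * inverse d * inverse e - 1) - 1 / (inverse d * inverse e * inverse b - 1)"
  proof (rule flow_half_sum[OF qy_ne_1 qz_ne_1])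
    show "(qy q k (j+1) y z + 1) / (qy q k (j+1) y z - 1) = inverse a * inverse d * inverse e"
      using flow_y[of k "j+1" y z] lattice_product_inverse[OF lat]
      unfolding b_def c_def g_def by (simp add: ac_simps)
    show "(qz q k (j+1) y z + 1) / (qz q k (j+1) y z - 1) * (inverse d * inverse e * inverse b) = 1"
      using flow_z[of k "j+1" y z] \<open>b \<noteq> 0\<close> \<open>d \<noteq> 0\<close> \<open>e \<noteq> 0\<close>
      unfolding b_def d_def e_def by (simp add: field_simps)
  qed
  finally show ?thesis
    unfolding rhs .
qed

lemma ured_t_eq_reduced_rhs:
  "ured_t q j n y z = reduced_rhs s \<gamma> (\<lambda>m. ured q j m y z) n"
proof (cases "even n")
  case True
  then obtain k where "n = 2 * k"
    by blast
  then show ?thesis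
    by (simp only: ured_t_even)
next
  case False
  then obtain k where "n = 2 * k - 1"
    by (metis oddE add_diff_cancel_right' distrib_left mult_1_right add.assoc one_add_one)
  then show ?thesis
    by (simp only: ured_t_odd)
qed

end

theorem mainTheorem7:
  fixes s :: "complex \<Rightarrow> complex"
    and q :: "int \<Rightarrow> int \<Rightarrow> real \<Rightarrow> real \<Rightarrow> complex"
    and \<gamma> :: complex and j n :: int and y z :: real
  assumes s_choice: "(\<exists>w1 w2. Im (w2 / w1) \<noteq> 0 \<and> s = weierstrass_sigma w1 w2)
                     \<or> s = sinh \<or> s = (\<lambda>x. x)"
    and diff_y: "\<And>n1 n2 y z. (\<lambda>y'. q n1 n2 y' z) differentiable (at y)"
    and diff_z: "\<And>n1 n2 y z. (\<lambda>z'. q n1 n2 y z') differentiable (at z)"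
    and defined: "\<And>n1 n2 y z.
        fq_def_ok s (q n1 n2 y z) (q (n1+1) n2 y z) (-2*\<gamma>) \<and>
        fq_def_ok s (q n1 n2 y z) (q (n1-1) n2 y z) (-2*\<gamma>) \<and>
        fq_def_ok s (q n1 n2 y z) (q n1 (n2+1) y z) \<gamma> \<and>
        fq_def_ok s (q n1 n2 y z) (q n1 (n2-1) y z) \<gamma> \<and>
        fq_def_ok s (q n1 n2 y z) (q (n1-1) (n2-1) y z) \<gamma> \<and>
        fq_def_ok s (q n1 n2 y z) (q (n1+1) (n2+1) y z) \<gamma> \<and>
        qy q n1 n2 y z \<noteq> 1 \<and> qz q n1 n2 y z \<noteq> 1"
    and lattice: "\<And>n1 n2 y z.
        fq s (q n1 n2 y z) (q (n1+1) n2 y z) (-2*\<gamma>) * fq s (q n1 n2 y z) (q (n1-1) n2 y z) (-2*\<gamma>)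
      * fq s (q n1 n2 y z) (q n1 (n2+1) y z) \<gamma> * fq s (q n1 n2 y z) (q n1 (n2-1) y z) \<gamma>
      * fq s (q n1 n2 y z) (q (n1-1) (n2-1) y z) \<gamma> * fq s (q n1 n2 y z) (q (n1+1) (n2+1) y z) \<gamma> = 1"
    and flow_y: "\<And>n1 n2 y z.
        (qy q n1 n2 y z + 1) / (qy q n1 n2 y z - 1) =
        fq s (q n1 n2 y z) (q (n1-1) n2 y z) (-2*\<gamma>) * fq s (q n1 n2 y z) (q n1 (n2+1) y z) \<gamma>
      * fq s (q n1 n2 y z) (q (n1+1) (n2+1) y z) \<gamma>"
    and flow_z: "\<And>n1 n2 y z.
        (qz q n1 n2 y z + 1) / (qz q n1 n2 y z - 1) =
        fq s (q n1 n2 y z) (q (n1-1) n2 y z) (-2*\<gamma>) * fq s (q n1 n2 y z) (q n1 (n2-1) y z) \<gamma>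
      * fq s (q n1 n2 y z) (q (n1-1) (n2-1) y z) \<gamma>"
    and concl_defined:
      "fq_def_ok s (ured q j n y z) (ured q j (n+2) y z) (2*\<gamma>)
     \<and> fq_def_ok s (ured q j n y z) (ured q j (n-2) y z) (2*\<gamma>)
     \<and> fq_def_ok s (ured q j n y z) (ured q j (n+1) y z) (-\<gamma>)
     \<and> fq_def_ok s (ured q j n y z) (ured q j (n-1) y z) (-\<gamma>)
     \<and> fq s (ured q j n y z) (ured q j (n+2) y z) (2*\<gamma>) * fq s (ured q j n y z) (ured q j (n+1) y z) (-\<gamma>)
         * fq s (ured q j n y z) (ured q j (n-1) y z) (-\<gamma>) \<noteq> 1
     \<and> fq s (ured q j n y z) (ured q j (n+1) y z) (-\<gamma>) * fq s (ured q j n y z) (ured q j (n-1) y z) (-\<gamma>)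
         * fq s (ured q j n y z) (ured q j (n-2) y z) (2*\<gamma>) \<noteq> 1"
  shows "(vector_derivative (\<lambda>y'. ured q j n y' z) (at y)
          + vector_derivative (\<lambda>z'. ured q j n y z') (at z)) / 2
       = 1 / (fq s (ured q j n y z) (ured q j (n+2) y z) (2*\<gamma>) * fq s (ured q j n y z) (ured q j (n+1) y z) (-\<gamma>)
              * fq s (ured q j n y z) (ured q j (n-1) y z) (-\<gamma>) - 1)
       - 1 / (fq s (ured q j n y z) (ured q j (n+1) y z) (-\<gamma>) * fq s (ured q j n y z) (ured q j (n-1) y z) (-\<gamma>)
              * fq s (ured q j n y z) (ured q j (n-2) y z) (2*\<gamma>) - 1)"
proof -
  interpret lattice_flow_solution s q \<gamma>
    using lattice flow_y flow_z defined by unfold_locales blast+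
  show ?thesis
    using ured_t_eq_reduced_rhs[of j n y z] unfolding ured_t_def reduced_rhs_def .
qed

end
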